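(* For every graph $G$, $\mathsf{tww}(G)\le 2\cdot\mathsf{mw}(G)-1$. Consequently, every graph class of bounded cliquewidth also has bounded twin-width.
   Context: All graphs are finite, simple, undirected. For $A\subseteq V(G)$, define $u\sim_A v$ for $u,v\in A$ iff $N(u)\setminus A=N(v)\setminus A$; the diversity of $A$ is the number of classes of $\sim_A$. A laminar decomposition of $G$ is a rooted binary tree whose leaf set is $V(G)$; its diversity is the maximum, over nodes $x$, of the diversity of the set of leaves below $x$. The modular-width $\mathsf{mw}(G)$ is the minimum diversity of a laminar decomposition; a class has bounded cliquewidth iff $\mathsf{mw}$ is bounded on it. For disjoint $A,B\subseteq V(G)$, the pair is impure if it is neither complete (all pairs adjacent) nor anti-complete (no pairs adjacent). For a partition $\mathcal P$ of $V(G)$, the error graph $\mathsf{err}(G,\mathcal P)$ has vertex set $\mathcal P$ with two distinct parts adjacent iff they form an impure pair. A contraction sequence of $G$ (with $n=|V(G)|$) is a sequence of partitions $\mathcal P_n,\ldots,\mathcal P_1$ where $\mathcal P_n$ is the partition into singletons, $\mathcal P_1=\{V(G)\}$, and each $\mathcal P_i$ arises from $\mathcal P_{i+1}$ by merging two parts; its width is the maximum over $i$ of the maximum degree of $\mathsf{err}(G,\mathcal P_i)$. The twin-width $\mathsf{tww}(G)$ is the minimum width of a contraction sequence; a class has bounded twin-width iff $\mathsf{tww}$ is bounded on it. *)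

theory Defs
  imports Main
begin

definition graph :: "'a set \<Rightarrow> ('a \<Rightarrow> 'a \<Rightarrow> bool) \<Rightarrow> bool" where
  "graph V E \<longleftrightarrow> finite V \<and> (\<forall>u v. E u v \<longrightarrow> u \<in> V \<and> v \<in> V)
     \<and> (\<forall>u v. E u v \<longrightarrow> E v u) \<and> (\<forall>u. \<not> E u u)"

definition nbhd :: "'a set \<Rightarrow> ('a \<Rightarrow> 'a \<Rightarrow> bool) \<Rightarrow> 'a \<Rightarrow> 'a set" where
  "nbhd V E u = {w \<in> V. E u w}"

definition twin_rel :: "'a set \<Rightarrow> ('a \<Rightarrow> 'a \<Rightarrow> bool) \<Rightarrow> 'a set \<Rightarrow> ('a \<times> 'a) set" where
  "twin_rel V E A = {(u, v). u \<in> A \<and> v \<in> A \<and> nbhd V E u - A = nbhd V E v - A}"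

definition diversity :: "'a set \<Rightarrow> ('a \<Rightarrow> 'a \<Rightarrow> bool) \<Rightarrow> 'a set \<Rightarrow> nat" where
  "diversity V E A = card (A // twin_rel V E A)"

datatype 'a ltree = Leaf 'a | Node "'a ltree" "'a ltree"

fun leaves :: "'a ltree \<Rightarrow> 'a set" where
  "leaves (Leaf v) = {v}"
| "leaves (Node l r) = leaves l \<union> leaves r"

fun distinct_leaves :: "'a ltree \<Rightarrow> bool" where
  "distinct_leaves (Leaf v) = True"
| "distinct_leaves (Node l r) =
     (distinct_leaves l \<and> distinct_leaves r \<and> leaves l \<inter> leaves r = {})"

fun subtrees :: "'a ltree \<Rightarrow> 'a ltree set" where
  "subtrees (Leaf v) = {Leaf v}"
| "subtrees (Node l r) = insert (Node l r) (subtrees l \<union> subtrees r)"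

definition laminar_decomposition :: "'a set \<Rightarrow> 'a ltree \<Rightarrow> bool" where
  "laminar_decomposition V T \<longleftrightarrow> distinct_leaves T \<and> leaves T = V"

definition dec_diversity :: "'a set \<Rightarrow> ('a \<Rightarrow> 'a \<Rightarrow> bool) \<Rightarrow> 'a ltree \<Rightarrow> nat" where
  "dec_diversity V E T = Max ((\<lambda>x. diversity V E (leaves x)) ` subtrees T)"

definition mw :: "'a set \<Rightarrow> ('a \<Rightarrow> 'a \<Rightarrow> bool) \<Rightarrow> nat" where
  "mw V E = (LEAST d. \<exists>T. laminar_decomposition V T \<and> dec_diversity V E T = d)"

definition impure :: "('a \<Rightarrow> 'a \<Rightarrow> bool) \<Rightarrow> 'a set \<Rightarrow> 'a set \<Rightarrow> bool" where
  "impure E A B \<longleftrightarrow> \<not> (\<forall>a\<in>A. \<forall>b\<in>B. E a b) \<and> \<not> (\<forall>a\<in>A. \<forall>b\<in>B. \<not> E a b)"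

definition err_degree :: "('a \<Rightarrow> 'a \<Rightarrow> bool) \<Rightarrow> 'a set set \<Rightarrow> 'a set \<Rightarrow> nat" where
  "err_degree E P X = card {Y \<in> P. Y \<noteq> X \<and> impure E X Y}"

definition max_err_degree :: "('a \<Rightarrow> 'a \<Rightarrow> bool) \<Rightarrow> 'a set set \<Rightarrow> nat" where
  "max_err_degree E P = Max (err_degree E P ` P)"

text \<open>A contraction sequence P_n, ..., P_1 with n = |V|, given as a function on indices 1..n.\<close>
definition contraction_sequence :: "'a set \<Rightarrow> (nat \<Rightarrow> 'a set set) \<Rightarrow> bool" where
  "contraction_sequence V P \<longleftrightarrow>
     P (card V) = (\<lambda>v. {v}) ` V \<and> P 1 = {V} \<and>
     (\<forall>i. 1 \<le> i \<and> i < card V \<longrightarrow>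
        (\<exists>X Y. X \<in> P (Suc i) \<and> Y \<in> P (Suc i) \<and> X \<noteq> Y \<and>
               P i = insert (X \<union> Y) (P (Suc i) - {X, Y})))"

definition cs_width :: "'a set \<Rightarrow> ('a \<Rightarrow> 'a \<Rightarrow> bool) \<Rightarrow> (nat \<Rightarrow> 'a set set) \<Rightarrow> nat" where
  "cs_width V E P = Max ((\<lambda>i. max_err_degree E (P i)) ` {1..card V})"

definition tww :: "'a set \<Rightarrow> ('a \<Rightarrow> 'a \<Rightarrow> bool) \<Rightarrow> nat" where
  "tww V E = (LEAST w. \<exists>P. contraction_sequence V P \<and> cs_width V E P = w)"

definition bounded_mw :: "('a set \<times> ('a \<Rightarrow> 'a \<Rightarrow> bool)) set \<Rightarrow> bool" where
  "bounded_mw C \<longleftrightarrow> (\<exists>k. \<forall>(V, E) \<in> C. mw V E \<le> k)"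

definition bounded_tww :: "('a set \<times> ('a \<Rightarrow> 'a \<Rightarrow> bool)) set \<Rightarrow> bool" where
  "bounded_tww C \<longleftrightarrow> (\<exists>k. \<forall>(V, E) \<in> C. tww V E \<le> k)"

end

theory Submission
  imports Defs "HOL-Library.Disjoint_Sets"
begin

text \<open>
  Take a laminar decomposition of diversity d and contract it bottom-up. At a node with leaf
  set L and children with leaf sets L1, L2, first contract L1 to its at most d twin classes
  (relative to L1), then L2, and finally merge two of these at most 2d parts whenever their
  union is still a set of twins relative to L, until exactly the twin classes of L remain.
  At every moment each part is a set of twins relative to a block containing it (a singleton,
  an already processed L1, or the current L); the blocks are disjoint and each contains at most
  2d parts. Two parts lying in disjoint blocks form a pure pair, so every part has at most
  2d - 1 impure neighbours, which bounds the width of the contraction sequence.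
\<close>

lemma partition_on_subset: "partition_on A P \<Longrightarrow> X \<in> P \<Longrightarrow> X \<subseteq> A"
  unfolding partition_on_def by auto

lemma partition_on_cover: "partition_on A P \<Longrightarrow> x \<in> A \<Longrightarrow> \<exists>X\<in>P. x \<in> X"
  unfolding partition_on_def by auto

lemma partition_on_Un:
  assumes "partition_on A P" "partition_on B Q" "A \<inter> B = {}"
  shows "partition_on (A \<union> B) (P \<union> Q)"
  using assms disjoint_union[of P Q] unfolding partition_on_def by auto

lemma partitions_of_disjoint_sets_disjoint:
  assumes "partition_on A P" "partition_on B Q" "A \<inter> B = {}"
  shows "P \<inter> Q = {}"
proof -
  have "Z \<subseteq> A \<inter> B" if "Z \<in> P \<inter> Q" for Z
    using that partition_on_subset[OF assms(1)] partition_on_subset[OF assms(2)] by auto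
  then show ?thesis
    using partition_onD3[OF assms(1)] assms(3) by auto
qed

definition merge_step :: "'a set set \<Rightarrow> 'a set set \<Rightarrow> bool" where
  "merge_step P P' \<longleftrightarrow> (\<exists>X Y. X \<in> P \<and> Y \<in> P \<and> X \<noteq> Y \<and> P' = insert (X \<union> Y) (P - {X, Y}))"

definition merge_within :: "('a set set \<Rightarrow> bool) \<Rightarrow> 'a set set \<Rightarrow> 'a set set \<Rightarrow> bool" where
  "merge_within Q P P' \<longleftrightarrow> merge_step P P' \<and> Q P'"

lemma contraction_sequence_iff_merge_steps:
  "contraction_sequence V P \<longleftrightarrow> P (card V) = (\<lambda>v. {v}) ` V \<and> P 1 = {V} \<and>
     (\<forall>i. 1 \<le> i \<and> i < card V \<longrightarrow> merge_step (P (Suc i)) (P i))"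
  unfolding contraction_sequence_def merge_step_def by blast

lemma merge_step_Un:
  assumes "merge_step R R'" "Out \<inter> R = {}"
  shows "merge_step (Out \<union> R) (Out \<union> R')"
proof -
  obtain X Y where XY: "X \<in> R" "Y \<in> R" "X \<noteq> Y" "R' = insert (X \<union> Y) (R - {X, Y})"
    using assms(1) unfolding merge_step_def by blast
  then have "Out \<union> R' = insert (X \<union> Y) ((Out \<union> R) - {X, Y})"
    using assms(2) by blast
  then show ?thesis unfolding merge_step_def using XY(1-3) by blast
qed

lemma partition_on_merge_step:
  assumes "partition_on A P" "merge_step P P'"
  shows "partition_on A P'"
proof -
  obtain X Y where XY: "X \<in> P" "Y \<in> P" "X \<noteq> Y" "P' = insert (X \<union> Y) (P - {X, Y})"
    using assms(2) unfolding merge_step_def by blast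
  have "disjnt (X \<union> Y) (\<Union>(P - {X, Y}))"
    using assms(1) XY(1,2) unfolding partition_on_def disjoint_def disjnt_def by blast
  moreover have "partition_on (A - (X \<union> Y)) (P - {X, Y})"
    using assms(1) XY(1,2) unfolding partition_on_def disjoint_def by blast
  moreover have "X \<union> Y \<subseteq> A" "X \<union> Y \<noteq> {}"
    using assms(1) XY(1,2) unfolding partition_on_def by blast+
  ultimately show ?thesis unfolding XY(4) by (simp add: partition_on_insert)
qed

lemma card_merge_step:
  assumes "partition_on A P" "finite P" "merge_step P P'"
  shows "card P = Suc (card P')"
proof -
  obtain X Y where XY: "X \<in> P" "Y \<in> P" "X \<noteq> Y" "P' = insert (X \<union> Y) (P - {X, Y})"
    using assms(3) unfolding merge_step_def by blast
  have "X \<union> Y \<notin> P - {X, Y}"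
  proof
    assume "X \<union> Y \<in> P - {X, Y}"
    then have "(X \<union> Y) \<inter> X = {}"
      using disjointD[OF partition_onD2[OF assms(1)] _ XY(1)] by blast
    then show False
      using partition_onD3[OF assms(1)] XY(1) by auto
  qed
  then have "card P' = Suc (card P - 2)"
    using assms(2) XY by (simp add: card_Diff_subset)
  moreover have "2 \<le> card P"
    using card_mono[OF assms(2), of "{X, Y}"] XY by simp
  ultimately show ?thesis by simp
qed

lemma merge_path_indexed:
  assumes "(merge_within Q)\<^sup>*\<^sup>* P0 {V}" "finite V" "partition_on V P0" "Q P0"
  shows "\<exists>P. P (card P0) = P0 \<and> P 1 = {V} \<and>
           (\<forall>i. 1 \<le> i \<and> i < card P0 \<longrightarrow> merge_step (P (Suc i)) (P i)) \<and>
           (\<forall>i\<in>{1..card P0}. Q (P i))"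
  using assms(1,3,4)
proof (induction rule: converse_rtranclp_induct)
  case base
  then show ?case by (intro exI[of _ "\<lambda>_. {V}"]) auto
next
  case (step P0 P1)
  have merge: "merge_step P0 P1" and "Q P1"
    using step.hyps(1) unfolding merge_within_def by blast+
  have "partition_on V P1"
    using partition_on_merge_step[OF step.prems(1) merge] .
  then obtain P where P: "P (card P1) = P1" "P 1 = {V}"
      "\<forall>i. 1 \<le> i \<and> i < card P1 \<longrightarrow> merge_step (P (Suc i)) (P i)"
      "\<forall>i\<in>{1..card P1}. Q (P i)"
    using step.IH \<open>Q P1\<close> by blast
  have card: "card P0 = Suc (card P1)"
    using card_merge_step[OF step.prems(1) finite_elements[OF assms(2) step.prems(1)] merge] .
  have "P1 \<noteq> {}" "finite P1"
    using merge finite_elements[OF assms(2) \<open>partition_on V P1\<close>]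
    unfolding merge_step_def by auto
  then have "1 \<le> card P1" by (simp add: Suc_leI card_gt_0_iff)
  define P' where "P' = P(card P0 := P0)"
  have "P' (card P0) = P0" "P' 1 = {V}"
    unfolding P'_def using P(2) card \<open>1 \<le> card P1\<close> by auto
  moreover have "merge_step (P' (Suc i)) (P' i)" if "1 \<le> i" "i < card P0" for i
  proof (cases "Suc i = card P0")
    case True
    then show ?thesis unfolding P'_def using P(1) card merge by auto
  next
    case False
    then show ?thesis unfolding P'_def using P(3) card that by auto
  qed
  moreover have "Q (P' i)" if "i \<in> {1..card P0}" for i
    using that P(4) card step.prems unfolding P'_def by (cases "i = card P0") auto
  ultimately show ?case by blast
qed

lemma contraction_sequence_from_merge_path:
  assumes "finite V" "(merge_within Q)\<^sup>*\<^sup>* ((\<lambda>v. {v}) ` V) {V}" "Q ((\<lambda>v. {v}) ` V)"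
  obtains P where "contraction_sequence V P"
    "\<And>i. i \<in> {1..card V} \<Longrightarrow> Q (P i)"
proof -
  have "card ((\<lambda>v. {v}) ` V) = card V" by (simp add: card_image)
  then show ?thesis
    using merge_path_indexed[OF assms(2,1) partition_on_singletons assms(3)] that
    unfolding contraction_sequence_iff_merge_steps by auto
qed

lemma subtree_self: "T \<in> subtrees T"
  by (cases T) auto

lemma finite_subtrees: "finite (subtrees T)"
  by (induction T) auto

lemma laminar_decomposition_exists:
  assumes "finite V" "V \<noteq> {}"
  shows "\<exists>T. laminar_decomposition V T"
  using assms
proof (induction V rule: finite_ne_induct)
  case (singleton x)
  have "laminar_decomposition {x} (Leaf x)"
    unfolding laminar_decomposition_def by simp
  then show ?case by blast
next
  case (insert x F)
  then obtain T where "laminar_decomposition F T" by blast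
  then have "laminar_decomposition (insert x F) (Node (Leaf x) T)"
    using insert.hyps unfolding laminar_decomposition_def by auto
  then show ?case by blast
qed

locale simple_graph =
  fixes V :: "'a set" and E :: "'a \<Rightarrow> 'a \<Rightarrow> bool"
  assumes graph: "graph V E"
begin

lemma finite_vertices: "finite V"
  using graph unfolding graph_def by blast

lemma adjacent_sym: "E u v \<Longrightarrow> E v u"
  using graph unfolding graph_def by blast

lemma adjacent_in_nbhd: "E u v \<Longrightarrow> v \<in> nbhd V E u"
  using graph unfolding graph_def nbhd_def by blast

definition twins_outside :: "'a set \<Rightarrow> 'a set \<Rightarrow> bool" where
  "twins_outside B X \<longleftrightarrow> (\<forall>u\<in>X. \<forall>v\<in>X. nbhd V E u - B = nbhd V E v - B)"

lemma twins_outside_mono: "twins_outside B X \<Longrightarrow> B \<subseteq> B' \<Longrightarrow> twins_outside B' X"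
  unfolding twins_outside_def by blast

lemma twins_outside_Un:
  assumes "twins_outside B X" "twins_outside B Y" "x \<in> X" "y \<in> Y"
    "nbhd V E x - B = nbhd V E y - B"
  shows "twins_outside B (X \<union> Y)"
  using assms unfolding twins_outside_def by (metis Un_iff)

lemma not_impure_if_twins_outside_disjoint:
  assumes "X \<subseteq> B" "Y \<subseteq> B'" "B \<inter> B' = {}" "twins_outside B X" "twins_outside B' Y"
  shows "\<not> impure E X Y"
proof
  assume "impure E X Y"
  then obtain x1 y1 x2 y2 where xy: "x1 \<in> X" "y1 \<in> Y" "E x1 y1" "x2 \<in> X" "y2 \<in> Y" "\<not> E x2 y2"
    unfolding impure_def by blast
  have "y1 \<notin> B" "x2 \<notin> B'"
    using xy(2,4) assms(1-3) by auto
  then have "y1 \<in> nbhd V E x2 - B"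
    using adjacent_in_nbhd[OF xy(3)] assms(4) xy(1,4) unfolding twins_outside_def by blast
  then have "x2 \<in> nbhd V E y1 - B'"
    using adjacent_in_nbhd adjacent_sym \<open>x2 \<notin> B'\<close> unfolding nbhd_def by blast
  then have "x2 \<in> nbhd V E y2"
    using assms(5) xy(2,5) unfolding twins_outside_def by blast
  then show False
    using xy(6) adjacent_sym unfolding nbhd_def by blast
qed

definition twin_classes :: "'a set \<Rightarrow> 'a set set" where
  "twin_classes L = L // twin_rel V E L"

lemma equiv_twin_rel: "equiv L (twin_rel V E L)"
  unfolding equiv_def refl_on_def sym_def trans_def twin_rel_def by auto

lemma partition_on_twin_classes: "partition_on L (twin_classes L)"
  unfolding twin_classes_def using partition_on_quotient[OF equiv_twin_rel] .

lemma twins_outside_twin_classes: "X \<in> twin_classes L \<Longrightarrow> twins_outside L X"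
  unfolding twin_classes_def twins_outside_def quotient_def twin_rel_def by auto

lemma twin_classes_singleton: "twin_classes {v} = {{v}}"
  unfolding twin_classes_def quotient_def twin_rel_def by auto

lemma twin_classes_vertices: "V \<noteq> {} \<Longrightarrow> twin_classes V = {V}"
  unfolding twin_classes_def quotient_def twin_rel_def nbhd_def by auto

lemma twin_classes_eq_if_no_twin_merge:
  assumes "partition_on L R" "\<forall>X\<in>R. twins_outside L X"
    "\<forall>X\<in>R. \<forall>Y\<in>R. X \<noteq> Y \<longrightarrow> \<not> twins_outside L (X \<union> Y)"
  shows "twin_classes L = R"
proof -
  have same_part: "\<exists>X\<in>R. x \<in> X \<and> y \<in> X" if "(x, y) \<in> twin_rel V E L" for x y
  proof -
    have "x \<in> L" "y \<in> L" and twins: "nbhd V E x - L = nbhd V E y - L"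
      using that unfolding twin_rel_def by auto
    then obtain X Y where XY: "X \<in> R" "x \<in> X" "Y \<in> R" "y \<in> Y"
      using partition_on_cover[OF assms(1)] by meson
    then have "twins_outside L (X \<union> Y)"
      using twins_outside_Un[OF _ _ _ _ twins] assms(2) by blast
    then have "X = Y"
      using assms(3) XY(1,3) by meson
    then show ?thesis
      using XY by auto
  qed
  have twins: "(x, y) \<in> twin_rel V E L" if "X \<in> R" "x \<in> X" "y \<in> X" for x y X
    using that partition_on_subset[OF assms(1)] assms(2) unfolding twin_rel_def twins_outside_def by blast
  have "twin_rel V E L = {(x, y). \<exists>X\<in>R. x \<in> X \<and> y \<in> X}"
    using same_part twins by auto
  then show ?thesis
    unfolding twin_classes_def using partition_on_eq_quotient[OF assms(1)] by simp
qed

definition block_cover :: "nat \<Rightarrow> 'a set set \<Rightarrow> 'a set set \<Rightarrow> bool" where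
  "block_cover d P F \<longleftrightarrow> disjoint F \<and> (\<forall>X\<in>P. \<exists>B\<in>F. X \<subseteq> B \<and> twins_outside B X) \<and>
     (\<forall>B\<in>F. card {X \<in> P. X \<subseteq> B} \<le> 2 * d)"

lemma err_degree_le_block_cover:
  assumes "block_cover d P F" "finite P" "X \<in> P"
  shows "err_degree E P X \<le> 2 * d - 1"
proof -
  obtain B where B: "B \<in> F" "X \<subseteq> B" "twins_outside B X"
    using assms(1,3) unfolding block_cover_def by blast
  have "Y \<subseteq> B" if "Y \<in> P" "impure E X Y" for Y
  proof -
    obtain B' where B': "B' \<in> F" "Y \<subseteq> B'" "twins_outside B' Y"
      using assms(1) \<open>Y \<in> P\<close> unfolding block_cover_def by blast
    then have "B' = B"
      using not_impure_if_twins_outside_disjoint[OF B(2) B'(2) _ B(3) B'(3)] \<open>impure E X Y\<close>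
        disjointD[of F B B'] assms(1) B(1) unfolding block_cover_def by blast
    then show ?thesis using B'(2) by simp
  qed
  then have "{Y \<in> P. Y \<noteq> X \<and> impure E X Y} \<subseteq> {Y \<in> P. Y \<subseteq> B} - {X}"
    by blast
  then have "err_degree E P X \<le> card ({Y \<in> P. Y \<subseteq> B} - {X})"
    unfolding err_degree_def using assms(2) by (intro card_mono) auto
  also have "\<dots> = card {Y \<in> P. Y \<subseteq> B} - 1"
    using assms(2,3) B(2) by (subst card_Diff_singleton) auto
  also have "\<dots> \<le> 2 * d - 1"
    using assms(1) B(1) unfolding block_cover_def by auto
  finally show ?thesis .
qed

lemma block_cover_singletons:
  assumes "1 \<le> d"
  shows "block_cover d ((\<lambda>v. {v}) ` A) ((\<lambda>v. {v}) ` A)"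
proof -
  have "{X \<in> (\<lambda>v. {v}) ` A. X \<subseteq> {v}} \<subseteq> {{v}}" for v
    by auto
  then have at_most_one: "card {X \<in> (\<lambda>v. {v}) ` A. X \<subseteq> {v}} \<le> 1" for v
    using card_mono[of "{{v}}"] by fastforce
  have "card {X \<in> (\<lambda>v. {v}) ` A. X \<subseteq> {v}} \<le> 2 * d" for v
    using at_most_one[of v] assms by linarith
  moreover have "disjoint ((\<lambda>v. {v}) ` A)"
    by (auto simp: disjoint_def)
  ultimately show ?thesis
    unfolding block_cover_def twins_outside_def by blast
qed

lemma block_cover_single_block:
  assumes "\<forall>X\<in>R. X \<subseteq> L \<and> twins_outside L X" "card R \<le> 2 * d"
  shows "block_cover d R {L}"
proof -
  have "{X \<in> R. X \<subseteq> L} = R"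
    using assms(1) by blast
  then show ?thesis
    using assms unfolding block_cover_def by (simp add: disjoint_def)
qed

lemma block_cover_Un:
  assumes "block_cover d P F" "block_cover d Q G" "\<Union>F \<inter> \<Union>G = {}" "{} \<notin> P" "{} \<notin> Q"
  shows "block_cover d (P \<union> Q) (F \<union> G)"
proof -
  \<comment> \<open>a nonempty part lies in a block of its own cover, so it misses every block of the other\<close>
  have parts_in: "{X \<in> P' \<union> Q'. X \<subseteq> B} = {X \<in> P'. X \<subseteq> B}"
    if "block_cover d Q' G'" "{} \<notin> Q'" "B \<inter> \<Union>G' = {}" for P' Q' G' B
  proof -
    have "\<not> X \<subseteq> B" if "X \<in> Q'" for X
    proof
      assume "X \<subseteq> B"
      obtain B' where "B' \<in> G'" "X \<subseteq> B'"
        using \<open>block_cover d Q' G'\<close> \<open>X \<in> Q'\<close> unfolding block_cover_def by blast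
      then have "X = {}" using \<open>X \<subseteq> B\<close> \<open>B \<inter> \<Union>G' = {}\<close> by auto
      then show False using \<open>X \<in> Q'\<close> \<open>{} \<notin> Q'\<close> by simp
    qed
    then show ?thesis by auto
  qed
  have "disjoint (F \<union> G)"
    using disjoint_union[OF _ _ assms(3)] assms(1,2) unfolding block_cover_def by simp
  moreover have "\<forall>X\<in>P \<union> Q. \<exists>B\<in>F \<union> G. X \<subseteq> B \<and> twins_outside B X"
    using assms(1,2) unfolding block_cover_def by blast
  moreover have "card {X \<in> P \<union> Q. X \<subseteq> B} \<le> 2 * d" if "B \<in> F" for B
  proof -
    have "B \<inter> \<Union>G = {}" using assms(3) that by auto
    then show ?thesis
      using parts_in[OF assms(2,5)] assms(1) that unfolding block_cover_def by auto
  qed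
  moreover have "card {X \<in> P \<union> Q. X \<subseteq> B} \<le> 2 * d" if "B \<in> G" for B
  proof -
    have "B \<inter> \<Union>F = {}" using assms(3) that by auto
    then show ?thesis
      using parts_in[OF assms(1,4), of B Q] assms(2) that Un_commute[of P Q]
      unfolding block_cover_def by auto
  qed
  ultimately show ?thesis
    unfolding block_cover_def by blast
qed

text \<open>The invariant on the parts outside the set L of vertices that is still being contracted.\<close>
definition covered :: "nat \<Rightarrow> 'a set \<Rightarrow> 'a set set \<Rightarrow> bool" where
  "covered d L P \<longleftrightarrow> L \<subseteq> V \<and> partition_on (V - L) P \<and> (\<exists>F. block_cover d P F \<and> \<Union>F \<inter> L = {})"

lemma covered_Un:
  assumes "covered d (L \<union> M) Out" "L \<inter> M = {}" "partition_on M R" "block_cover d R G"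
    "\<Union>G \<subseteq> M"
  shows "covered d L (Out \<union> R)"
proof -
  obtain F where F: "block_cover d Out F" "\<Union>F \<inter> (L \<union> M) = {}"
    and LM: "L \<union> M \<subseteq> V" "partition_on (V - (L \<union> M)) Out"
    using assms(1) unfolding covered_def by blast
  have "V - L = (V - (L \<union> M)) \<union> M"
    using LM(1) assms(2) by blast
  moreover have "partition_on ((V - (L \<union> M)) \<union> M) (Out \<union> R)"
    using partition_on_Un[OF LM(2) assms(3)] by blast
  moreover have "block_cover d (Out \<union> R) (F \<union> G)"
    using block_cover_Un[OF F(1) assms(4)] F(2) assms(5) partition_onD3 LM(2) assms(3) by blast
  moreover have "\<Union>(F \<union> G) \<inter> L = {}"
    using F(2) assms(2,5) by blast
  ultimately show ?thesis
    unfolding covered_def using LM(1) by (intro conjI exI[of _ "F \<union> G"]) auto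
qed

lemma merge_to_twin_classes:
  assumes "covered d L Out" "partition_on L R" "\<forall>X\<in>R. twins_outside L X" "card R \<le> 2 * d"
  shows "(merge_within (covered d {}))\<^sup>*\<^sup>* (Out \<union> R) (Out \<union> twin_classes L)"
  using assms(2-4)
proof (induction "card R" arbitrary: R rule: less_induct)
  case less
  show ?case
  proof (cases "\<exists>X\<in>R. \<exists>Y\<in>R. X \<noteq> Y \<and> twins_outside L (X \<union> Y)")
    case False
    then show ?thesis
      using twin_classes_eq_if_no_twin_merge[OF less.prems(1,2)] by auto
  next
    case True
    then obtain X Y where XY: "X \<in> R" "Y \<in> R" "X \<noteq> Y" "twins_outside L (X \<union> Y)"
      by blast
    define R' where "R' = insert (X \<union> Y) (R - {X, Y})"
    have merge: "merge_step R R'"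
      unfolding merge_step_def R'_def using XY(1-3) by blast
    have L: "L \<subseteq> V" "partition_on (V - L) Out"
      using assms(1) unfolding covered_def by auto
    have "finite R"
      using finite_elements[OF finite_subset[OF L(1) finite_vertices] less.prems(1)] .
    then have card: "card R = Suc (card R')"
      using card_merge_step[OF less.prems(1) _ merge] by blast
    have part: "partition_on L R'"
      using partition_on_merge_step[OF less.prems(1) merge] .
    have twins: "\<forall>Z\<in>R'. twins_outside L Z"
      unfolding R'_def using XY(4) less.prems(2) by blast
    have "Out \<inter> R = {}"
      using partitions_of_disjoint_sets_disjoint[OF L(2) less.prems(1)] by blast
    then have "merge_step (Out \<union> R) (Out \<union> R')"
      using merge_step_Un[OF merge] by blast
    moreover have "covered d {} (Out \<union> R')"
    proof -
      have "block_cover d R' {L}"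
        using block_cover_single_block twins partition_on_subset[OF part] card less.prems(3)
        by simp
      then show ?thesis
        using covered_Un[of d "{}" L Out R' "{L}"] assms(1) part by simp
    qed
    ultimately have "merge_within (covered d {}) (Out \<union> R) (Out \<union> R')"
      unfolding merge_within_def by blast
    moreover have "(merge_within (covered d {}))\<^sup>*\<^sup>* (Out \<union> R') (Out \<union> twin_classes L)"
      using less.hyps[of R'] card part twins less.prems(3) by simp
    ultimately show ?thesis
      by (rule converse_rtranclp_into_rtranclp)
  qed
qed

lemma tree_to_twin_classes:
  assumes "distinct_leaves T" "\<forall>S\<in>subtrees T. diversity V E (leaves S) \<le> d" "1 \<le> d"
    "covered d (leaves T) Out"
  shows "(merge_within (covered d {}))\<^sup>*\<^sup>* (Out \<union> (\<lambda>v. {v}) ` leaves T) (Out \<union> twin_classes (leaves T))"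
  using assms
proof (induction T arbitrary: Out)
  case (Leaf v)
  then show ?case using twin_classes_singleton by simp
next
  case (Node l r)
  define Ll Lr where "Ll = leaves l" and "Lr = leaves r"
  have L: "leaves (Node l r) = Ll \<union> Lr" "Ll \<inter> Lr = {}"
    using Node.prems(1) unfolding Ll_def Lr_def by auto
  have div: "diversity V E Ll \<le> d" "diversity V E Lr \<le> d"
    using Node.prems(2) subtree_self unfolding Ll_def Lr_def by auto
  have "covered d Ll (Out \<union> (\<lambda>v. {v}) ` Lr)"
    by (rule covered_Un[OF Node.prems(4)[unfolded L(1)] L(2) partition_on_singletons
          block_cover_singletons[OF Node.prems(3)]]) auto
  then have left: "(merge_within (covered d {}))\<^sup>*\<^sup>*
      ((Out \<union> (\<lambda>v. {v}) ` Lr) \<union> (\<lambda>v. {v}) ` Ll) ((Out \<union> (\<lambda>v. {v}) ` Lr) \<union> twin_classes Ll)"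
    using Node.IH(1) Node.prems(1-3) unfolding Ll_def by simp
  have left_block: "block_cover d (twin_classes Ll) {Ll}"
    using block_cover_single_block twins_outside_twin_classes
      partition_on_subset[OF partition_on_twin_classes] div(1)
    unfolding diversity_def twin_classes_def by simp
  have "covered d (Lr \<union> Ll) Out" "Lr \<inter> Ll = {}"
    using Node.prems(4) L by (auto simp: Un_commute)
  then have "covered d Lr (Out \<union> twin_classes Ll)"
    by (rule covered_Un[OF _ _ partition_on_twin_classes left_block]) auto
  then have right: "(merge_within (covered d {}))\<^sup>*\<^sup>*
      ((Out \<union> twin_classes Ll) \<union> (\<lambda>v. {v}) ` Lr) ((Out \<union> twin_classes Ll) \<union> twin_classes Lr)"
    using Node.IH(2) Node.prems(1-3) unfolding Lr_def by simp
  have "card (twin_classes Ll \<union> twin_classes Lr) \<le> 2 * d"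
    using card_Un_le[of "twin_classes Ll" "twin_classes Lr"] div unfolding diversity_def twin_classes_def
    by linarith
  then have top: "(merge_within (covered d {}))\<^sup>*\<^sup>*
      (Out \<union> (twin_classes Ll \<union> twin_classes Lr)) (Out \<union> twin_classes (Ll \<union> Lr))"
    using merge_to_twin_classes[OF Node.prems(4)[unfolded L(1)]
        partition_on_Un[OF partition_on_twin_classes partition_on_twin_classes L(2)]]
      twins_outside_twin_classes twins_outside_mono by blast
  have "Out \<union> (\<lambda>v. {v}) ` leaves (Node l r) = (Out \<union> (\<lambda>v. {v}) ` Lr) \<union> (\<lambda>v. {v}) ` Ll"
    "(Out \<union> (\<lambda>v. {v}) ` Lr) \<union> twin_classes Ll = (Out \<union> twin_classes Ll) \<union> (\<lambda>v. {v}) ` Lr"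
    "(Out \<union> twin_classes Ll) \<union> twin_classes Lr = Out \<union> (twin_classes Ll \<union> twin_classes Lr)"
    unfolding L(1) by auto
  then show ?case
    using left right top L(1) by (metis rtranclp_trans)
qed

lemma max_err_degree_le_if_covered:
  assumes "covered d {} P" "V \<noteq> {}"
  shows "max_err_degree E P \<le> 2 * d - 1"
proof -
  have part: "partition_on V P" and cover: "\<exists>F. block_cover d P F"
    using assms(1) unfolding covered_def by auto
  have "finite P" "P \<noteq> {}"
    using finite_elements[OF finite_vertices part] partition_onD1[OF part] assms(2) by auto
  then show ?thesis
    unfolding max_err_degree_def using cover err_degree_le_block_cover by auto
qed

lemma tww_le_if_covered_merge_path:
  assumes "V \<noteq> {}" "covered d {} ((\<lambda>v. {v}) ` V)"
    "(merge_within (covered d {}))\<^sup>*\<^sup>* ((\<lambda>v. {v}) ` V) {V}"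
  shows "tww V E \<le> 2 * d - 1"
proof -
  obtain P where P: "contraction_sequence V P" "\<And>i. i \<in> {1..card V} \<Longrightarrow> covered d {} (P i)"
    using contraction_sequence_from_merge_path[OF finite_vertices assms(3,2)] by metis
  have "1 \<le> card V"
    using assms(1) finite_vertices by (simp add: Suc_leI card_gt_0_iff)
  then have "cs_width V E P \<le> 2 * d - 1"
    unfolding cs_width_def using P(2) max_err_degree_le_if_covered[OF _ assms(1)]
    by (subst Max_le_iff) auto
  moreover have "tww V E \<le> cs_width V E P"
    unfolding tww_def using P(1) by (intro Least_le) blast
  ultimately show ?thesis by simp
qed

lemma tww_le_dec_diversity:
  assumes "V \<noteq> {}" "laminar_decomposition V T"
  shows "tww V E \<le> 2 * dec_diversity V E T - 1"
proof -
  define d where "d = dec_diversity V E T"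
  have T: "distinct_leaves T" "leaves T = V"
    using assms(2) unfolding laminar_decomposition_def by auto
  have div: "\<forall>S\<in>subtrees T. diversity V E (leaves S) \<le> d"
    unfolding d_def dec_diversity_def using finite_subtrees by (auto intro!: Max_ge)
  have "diversity V E V = 1"
    unfolding diversity_def using twin_classes_vertices[OF assms(1)]
    unfolding twin_classes_def by simp
  then have "1 \<le> d"
    using div subtree_self T(2) by metis
  have start: "covered d V {}"
    unfolding covered_def block_cover_def by (auto simp: partition_on_empty intro: exI[of _ "{}"])
  then have "covered d {} ((\<lambda>v. {v}) ` V)"
    using covered_Un[of d "{}" V "{}", OF _ _ partition_on_singletons
        block_cover_singletons[OF \<open>1 \<le> d\<close>]] by simp
  moreover have "(merge_within (covered d {}))\<^sup>*\<^sup>* ((\<lambda>v. {v}) ` V) {V}"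
    using tree_to_twin_classes[OF T(1) div \<open>1 \<le> d\<close>, of "{}"] start
      twin_classes_vertices[OF assms(1)] T(2) by simp
  ultimately show ?thesis
    using tww_le_if_covered_merge_path[OF assms(1)] unfolding d_def by blast
qed

lemma tww_le_mw:
  assumes "V \<noteq> {}"
  shows "tww V E \<le> 2 * mw V E - 1"
proof -
  have "\<exists>d T. laminar_decomposition V T \<and> dec_diversity V E T = d"
    using laminar_decomposition_exists[OF finite_vertices assms] by blast
  then have "\<exists>T. laminar_decomposition V T \<and> dec_diversity V E T = mw V E"
    unfolding mw_def by (rule LeastI_ex)
  then obtain T where "laminar_decomposition V T" "dec_diversity V E T = mw V E"
    by blast
  then show ?thesis
    using tww_le_dec_diversity[OF assms] by metis
qed

end

theorem theorem3p43:
  shows "(\<forall>(V :: 'a set) E. graph V E \<and> V \<noteq> {} \<longrightarrow> tww V E \<le> 2 * mw V E - 1) \<and>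
         (\<forall>C :: ('a set \<times> ('a \<Rightarrow> 'a \<Rightarrow> bool)) set.
            (\<forall>(V, E) \<in> C. graph V E \<and> V \<noteq> {}) \<longrightarrow> bounded_mw C \<longrightarrow> bounded_tww C)"
proof -
  have tww_mw: "tww V E \<le> 2 * mw V E - 1" if "graph V E" "V \<noteq> {}" for V :: "'a set" and E
    using simple_graph.tww_le_mw[of V E] that unfolding simple_graph_def by blast
  have "bounded_tww C"
    if C: "\<forall>(V, E) \<in> C. graph V E \<and> V \<noteq> {}" and "bounded_mw C"
    for C :: "('a set \<times> ('a \<Rightarrow> 'a \<Rightarrow> bool)) set"
  proof -
    obtain k where k: "\<forall>(V, E) \<in> C. mw V E \<le> k"
      using \<open>bounded_mw C\<close> unfolding bounded_mw_def by blast
    have "tww V E \<le> 2 * k - 1" if "(V, E) \<in> C" for V E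
      using tww_mw[of V E] C k that by fastforce
    then show ?thesis
      unfolding bounded_tww_def by blast
  qed
  then show ?thesis
    using tww_mw by blast
qed

end
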